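(* Let $G$ be a $k$-chromatic graph and $\{u,v\}$ an implicit-edge (respectively implicit-identity) of $G$. Let $0\le \ell\le k-2$ and let $S_1,\dots,S_\ell$ be vertex sets not containing $u$ or $v$ such that, for each $i$, $S_i$ is a critical independent set of $G-(S_1\cup\dots\cup S_{i-1})$. Then $\{u,v\}$ is an implicit-edge (respectively implicit-identity) of $H=G-(S_1\cup\dots\cup S_\ell)$, with respect to $\chi(H)=k-\ell$.
   Context: All graphs are finite, simple and connected. For a graph $G$ and vertices $u,v$, $G-uv$ denotes $G$ with the edge $uv$ removed if $uv\in E(G)$ (and $G$ itself otherwise). A $k$-coloring is a proper vertex coloring with colors from $\{1,\dots,k\}$. Given a $k$-chromatic graph $G$, a pair of distinct vertices $\{u,v\}$ is an implicit-edge of $G$ iff there is no $k$-coloring $c$ of $G-uv$ with $c(u)=c(v)$, and an implicit-identity of $G$ iff there is no $k$-coloring $c$ of $G-uv$ with $c(u)\neq c(v)$. An independent set $S$ of a $k$-chromatic graph $G$ is critical iff $\chi(G-S)=k-1$. *)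

theory Defs
  imports Main
begin

definition simple_graph :: "'a set \<Rightarrow> 'a set set \<Rightarrow> bool" where
  "simple_graph V E \<longleftrightarrow> finite V \<and> (\<forall>e\<in>E. e \<subseteq> V \<and> card e = 2)"

definition connected_graph :: "'a set \<Rightarrow> 'a set set \<Rightarrow> bool" where
  "connected_graph V E \<longleftrightarrow> V \<noteq> {} \<and>
     (\<forall>x\<in>V. \<forall>y\<in>V. (\<lambda>a b. {a, b} \<in> E)\<^sup>*\<^sup>* x y)"

definition coloring :: "'a set \<Rightarrow> 'a set set \<Rightarrow> nat \<Rightarrow> ('a \<Rightarrow> nat) \<Rightarrow> bool" where
  "coloring V E k c \<longleftrightarrow> (\<forall>x\<in>V. c x \<in> {1..k}) \<and> (\<forall>x y. {x, y} \<in> E \<longrightarrow> c x \<noteq> c y)"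

definition chromatic_number :: "'a set \<Rightarrow> 'a set set \<Rightarrow> nat" where
  "chromatic_number V E = (LEAST k. \<exists>c. coloring V E k c)"

definition del_edges :: "'a set \<Rightarrow> 'a set set \<Rightarrow> 'a set set" where
  "del_edges S E = {e \<in> E. e \<inter> S = {}}"

definition rem_edge :: "'a set set \<Rightarrow> 'a \<Rightarrow> 'a \<Rightarrow> 'a set set" where
  "rem_edge E u v = E - {{u, v}}"

definition implicit_edge :: "'a set \<Rightarrow> 'a set set \<Rightarrow> nat \<Rightarrow> 'a \<Rightarrow> 'a \<Rightarrow> bool" where
  "implicit_edge V E k u v \<longleftrightarrow> u \<in> V \<and> v \<in> V \<and> u \<noteq> v \<and>
     \<not> (\<exists>c. coloring V (rem_edge E u v) k c \<and> c u = c v)"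

definition implicit_identity :: "'a set \<Rightarrow> 'a set set \<Rightarrow> nat \<Rightarrow> 'a \<Rightarrow> 'a \<Rightarrow> bool" where
  "implicit_identity V E k u v \<longleftrightarrow> u \<in> V \<and> v \<in> V \<and> u \<noteq> v \<and>
     \<not> (\<exists>c. coloring V (rem_edge E u v) k c \<and> c u \<noteq> c v)"

definition independent_set :: "'a set \<Rightarrow> 'a set set \<Rightarrow> 'a set \<Rightarrow> bool" where
  "independent_set V E S \<longleftrightarrow> S \<subseteq> V \<and> (\<forall>x\<in>S. \<forall>y\<in>S. {x, y} \<notin> E)"

definition critical_independent_set :: "'a set \<Rightarrow> 'a set set \<Rightarrow> 'a set \<Rightarrow> bool" where
  "critical_independent_set V E S \<longleftrightarrow> independent_set V E S \<and>
     chromatic_number (V - S) (del_edges S E) = chromatic_number V E - 1"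

end

theory Submission
  imports Defs
begin

(* Write U_i = S_0 \<union> ... \<union> S_(i-1) and G_i = G - U_i.  Each S_i is an
   independent set of G_i whose removal lowers the chromatic number by one, so by induction
   chi(G_l) = k - l.  Conversely, the layers can be put back: a coloring of G_l with colors
   1..k-l extends to a k-coloring of G by giving each removed vertex x the color k - i, where
   i is the first layer with x in S_i.  Two removed vertices in the same first layer i both lie
   in G_i, where S_i is independent, so they are not adjacent; vertices in different layers, or
   one removed and one kept, get different colors by construction.  The extension only needs
   independence of the layers, so it works for every subgraph of G on the same vertices, in
   particular for G - uv.  Since u and v are never removed, the extension keeps their colors,
   so a coloring of G_l - uv with c(u) = c(v) (resp. c(u) \<noteq> c(v)) would yield one of
   G - uv with k colors; this transfers both implicit-edges and implicit-identities. *)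

lemma del_edges_Un: "del_edges (A \<union> B) E = del_edges B (del_edges A E)"
  by (auto simp: del_edges_def)

lemma del_edges_rem_edge: "del_edges U (rem_edge E u v) = rem_edge (del_edges U E) u v"
  by (auto simp: del_edges_def rem_edge_def)

lemma chromatic_number_after_layers:
  assumes chi: "chromatic_number V E = k"
    and crit: "\<forall>i<l. critical_independent_set (V - (\<Union>j<i. S j)) (del_edges (\<Union>j<i. S j) E) (S i)"
    and "i \<le> l"
  shows "chromatic_number (V - (\<Union>j<i. S j)) (del_edges (\<Union>j<i. S j) E) = k - i"
  using \<open>i \<le> l\<close>
proof (induction i)
  case 0
  have "del_edges {} E = E" by (auto simp: del_edges_def)
  then show ?case using chi by simp
next
  case (Suc i)
  have IH: "chromatic_number (V - (\<Union>j<i. S j)) (del_edges (\<Union>j<i. S j) E) = k - i"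
    using Suc by simp
  have "critical_independent_set (V - (\<Union>j<i. S j)) (del_edges (\<Union>j<i. S j) E) (S i)"
    using crit Suc.prems by auto
  moreover have "(\<Union>j<Suc i. S j) = (\<Union>j<i. S j) \<union> S i"
    by (auto simp: lessThan_Suc)
  then have "V - (\<Union>j<Suc i. S j) = (V - (\<Union>j<i. S j)) - S i"
    and "del_edges (\<Union>j<Suc i. S j) E = del_edges (S i) (del_edges (\<Union>j<i. S j) E)"
    by (auto simp: del_edges_Un)
  ultimately show ?case
    using IH by (simp add: critical_independent_set_def)
qed

definition first_layer :: "(nat \<Rightarrow> 'a set) \<Rightarrow> 'a \<Rightarrow> nat" where
  "first_layer S x = (LEAST i. x \<in> S i)"

lemma first_layer:
  assumes "x \<in> (\<Union>j<l. S j)"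
  shows "first_layer S x < l" "x \<in> S (first_layer S x)"
    and "x \<notin> (\<Union>j<first_layer S x. S j)"
proof -
  obtain i where i: "i < l" "x \<in> S i" using assms by auto
  show "first_layer S x < l"
    using Least_le[of "\<lambda>i. x \<in> S i", OF i(2)] i(1) unfolding first_layer_def by simp
  show "x \<in> S (first_layer S x)"
    using LeastI[of "\<lambda>i. x \<in> S i", OF i(2)] unfolding first_layer_def .
  show "x \<notin> (\<Union>j<first_layer S x. S j)"
  proof
    assume "x \<in> (\<Union>j<first_layer S x. S j)"
    then obtain j where "j < (LEAST i. x \<in> S i)" "x \<in> S j"
      unfolding first_layer_def by blast
    then show False using not_less_Least by blast
  qed
qed

text \<open>Removed vertices with the same first layer are never adjacent, because both survive
  until that layer, which is independent at that stage.\<close>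

lemma same_first_layer_nonadjacent:
  assumes indep: "\<forall>i<l. independent_set (V - (\<Union>j<i. S j)) (del_edges (\<Union>j<i. S j) E) (S i)"
    and x: "x \<in> (\<Union>j<l. S j)" and y: "y \<in> (\<Union>j<l. S j)"
    and same: "first_layer S x = first_layer S y"
  shows "{x, y} \<notin> E"
proof
  assume xy: "{x, y} \<in> E"
  define i where "i = first_layer S x"
  have "{x, y} \<in> del_edges (\<Union>j<i. S j) E"
    using xy first_layer(3)[OF x] first_layer(3)[OF y] same
    by (auto simp: del_edges_def i_def)
  moreover have "independent_set (V - (\<Union>j<i. S j)) (del_edges (\<Union>j<i. S j) E) (S i)"
    using indep first_layer(1)[OF x] by (simp add: i_def)
  ultimately show False
    using first_layer(2)[OF x] first_layer(2)[OF y] same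
    unfolding independent_set_def i_def by simp
qed

text \<open>Put the removed layers back: layer i receives the color k - i, above all colors 1..k-l
  used on the remaining graph.\<close>

definition stack_layers :: "nat \<Rightarrow> (nat \<Rightarrow> 'a set) \<Rightarrow> nat \<Rightarrow> ('a \<Rightarrow> nat) \<Rightarrow> 'a \<Rightarrow> nat" where
  "stack_layers k S l c x = (if x \<in> (\<Union>j<l. S j) then k - first_layer S x else c x)"

lemma stack_layers_coloring:
  assumes edges: "\<forall>e\<in>F. e \<subseteq> V" and "F \<subseteq> E" and "l \<le> k"
    and indep: "\<forall>i<l. independent_set (V - (\<Union>j<i. S j)) (del_edges (\<Union>j<i. S j) E) (S i)"
    and col: "coloring (V - (\<Union>j<l. S j)) (del_edges (\<Union>j<l. S j) F) (k - l) c"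
  shows "coloring V F k (stack_layers k S l c)"
proof -
  define U where "U = (\<Union>j<l. S j)"
  define c' where "c' = stack_layers k S l c"
  have low: "c x \<in> {1..k - l}" if "x \<in> V" "x \<notin> U" for x
    using col that unfolding coloring_def U_def by auto
  have high: "c' x \<in> {k - l + 1..k}" if "x \<in> U" for x
    using first_layer(1)[of x S l] that \<open>l \<le> k\<close>
    by (auto simp: c'_def stack_layers_def U_def)
  have kept: "c' x = c x" if "x \<notin> U" for x
    using that by (simp add: c'_def stack_layers_def U_def)
  have range: "c' x \<in> {1..k}" if "x \<in> V" for x
  proof (cases "x \<in> U")
    case True
    then show ?thesis using high[OF True] by auto
  next
    case False
    then show ?thesis using low[OF that False] kept[OF False] by auto
  qed
  have proper: "c' x \<noteq> c' y" if xy: "{x, y} \<in> F" for x y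
  proof -
    have xyV: "x \<in> V" "y \<in> V" using edges xy by auto
    consider "x \<in> U" "y \<in> U" | "x \<in> U" "y \<notin> U" | "x \<notin> U" "y \<in> U" | "x \<notin> U" "y \<notin> U"
      by blast
    then show ?thesis
    proof cases
      case 1
      have "first_layer S x \<noteq> first_layer S y"
        using same_first_layer_nonadjacent[OF indep] xy \<open>F \<subseteq> E\<close> 1 unfolding U_def by blast
      moreover have "first_layer S x < l" "first_layer S y < l"
        using 1 first_layer(1)[of x S l] first_layer(1)[of y S l] unfolding U_def by simp_all
      ultimately show ?thesis
        using 1 \<open>l \<le> k\<close> by (simp add: c'_def stack_layers_def U_def)
    next
      case 2
      then show ?thesis using high[of x] low[of y] kept[of y] xyV by auto
    next
      case 3
      then show ?thesis using high[of y] low[of x] kept[of x] xyV by auto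
    next
      case 4
      then have "{x, y} \<in> del_edges U F" using xy by (auto simp: del_edges_def)
      then have "c x \<noteq> c y"
        using col unfolding coloring_def U_def by blast
      then show ?thesis using kept 4 by simp
    qed
  qed
  show ?thesis using range proper unfolding coloring_def c'_def by blast
qed

lemma lift_coloring_minus_uv:
  assumes "simple_graph V E" and "l \<le> k"
    and uv: "\<forall>i<l. u \<notin> S i \<and> v \<notin> S i"
    and crit: "\<forall>i<l. critical_independent_set (V - (\<Union>j<i. S j)) (del_edges (\<Union>j<i. S j) E) (S i)"
    and col: "coloring (V - (\<Union>j<l. S j)) (rem_edge (del_edges (\<Union>j<l. S j) E) u v) (k - l) c"
  shows "\<exists>c'. coloring V (rem_edge E u v) k c' \<and> c' u = c u \<and> c' v = c v"
proof (intro exI conjI)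
  show "coloring V (rem_edge E u v) k (stack_layers k S l c)"
  proof (rule stack_layers_coloring)
    show "\<forall>e\<in>rem_edge E u v. e \<subseteq> V"
      using \<open>simple_graph V E\<close> by (auto simp: simple_graph_def rem_edge_def)
    show "\<forall>i<l. independent_set (V - (\<Union>j<i. S j)) (del_edges (\<Union>j<i. S j) E) (S i)"
      using crit by (simp add: critical_independent_set_def)
    show "rem_edge E u v \<subseteq> E" by (auto simp: rem_edge_def)
    show "coloring (V - (\<Union>j<l. S j)) (del_edges (\<Union>j<l. S j) (rem_edge E u v)) (k - l) c"
      using col by (simp add: del_edges_rem_edge)
  qed (rule \<open>l \<le> k\<close>)
  show "stack_layers k S l c u = c u" "stack_layers k S l c v = c v"
    using uv by (auto simp: stack_layers_def)
qed

theorem theorem3: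
  fixes V :: "'a set" and E :: "'a set set" and k l :: nat and u v :: 'a
    and S :: "nat \<Rightarrow> 'a set"
  assumes "simple_graph V E" and "connected_graph V E"
    and "chromatic_number V E = k"
    and "l + 2 \<le> k"
    and "\<forall>i<l. u \<notin> S i \<and> v \<notin> S i"
    and "\<forall>i<l. critical_independent_set (V - (\<Union>j<i. S j)) (del_edges (\<Union>j<i. S j) E) (S i)"
  shows "chromatic_number (V - (\<Union>j<l. S j)) (del_edges (\<Union>j<l. S j) E) = k - l
    \<and> (implicit_edge V E k u v \<longrightarrow>
         implicit_edge (V - (\<Union>j<l. S j)) (del_edges (\<Union>j<l. S j) E) (k - l) u v)
    \<and> (implicit_identity V E k u v \<longrightarrow>
         implicit_identity (V - (\<Union>j<l. S j)) (del_edges (\<Union>j<l. S j) E) (k - l) u v)"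
proof -
  have kept: "u \<notin> (\<Union>j<l. S j)" "v \<notin> (\<Union>j<l. S j)" using assms(5) by auto
  note lift = lift_coloring_minus_uv[OF assms(1) _ assms(5) assms(6)]
  have "l \<le> k" using assms(4) by simp
  have "chromatic_number (V - (\<Union>j<l. S j)) (del_edges (\<Union>j<l. S j) E) = k - l"
    using chromatic_number_after_layers[OF assms(3) assms(6)] by simp
  moreover have "implicit_edge (V - (\<Union>j<l. S j)) (del_edges (\<Union>j<l. S j) E) (k - l) u v"
    if "implicit_edge V E k u v"
    using that kept lift[OF \<open>l \<le> k\<close>] unfolding implicit_edge_def by (metis DiffI)
  moreover have "implicit_identity (V - (\<Union>j<l. S j)) (del_edges (\<Union>j<l. S j) E) (k - l) u v"
    if "implicit_identity V E k u v"
    using that kept lift[OF \<open>l \<le> k\<close>] unfolding implicit_identity_def by (metis DiffI)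
  ultimately show ?thesis by blast
qed

end
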